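(* Let $(\Sigma,\mu)$ be a $\sigma$-finite measure space, $1\le\ell<q<r\le\infty$ and $T>0$. Let $g\in L^1(0,T;L^\ell_\mu\cap L^q_\mu)$ and $u\in L^\infty(0,T;L^\ell_\mu\cap L^r_\mu)$, write $u_0=u(0)$, and suppose that for some $\omega\ge0$, all $0\le s\le t\le T$ and $\lambda\ge0$, $$\|G_\lambda(e^{-\omega t}u(t))\|_\ell\le\|G_\lambda(e^{-\omega s}u(s))\|_\ell+\int_s^te^{-\omega\tau}\|g(\tau)\mathbb{1}_{\{e^{-\omega\tau}|u(\tau)|>\lambda\}}\|_\ell d\tau.$$ Suppose there are increasing functions $c_1,c_2$ on $[0,T]$ with $c_1>0$, $c_2\ge0$, and exponents $\alpha\ge0$, $0<\gamma^*\le\gamma<\infty$ such that for every $t\in(0,T]$ $$\|u(t)\|_r\le\max\Big\{c_1(\tfrac t2)\big(\tfrac2t+\omega\big)^\alpha\big(\|u(\tfrac t2)\|_q+\|g\|_{L^1(\frac t2,t;L^q_\mu)}\big)^\gamma,\ c_2(\tfrac t2)\big(\|u(\tfrac t2)\|_q+\|g\|_{L^1(\frac t2,t;L^q_\mu)}\big)^{\gamma^*}\Big\}.$$ Let $\theta:=1-\gamma\frac{\frac1\ell-\frac1q}{\frac1\ell-\frac1r}$ and suppose $\theta>0$. Then for all $t\in(0,T]$ $$\|u(t)\|_r\le2^\gamma\Big(2^{\frac{\alpha}{\gamma\theta}}+\sup_{s\in(0,t]}N(s)^\theta\Big)^{\frac\gamma\theta}\max\Big\{c_1(t)^{\frac1\theta}\big(\tfrac1t+\omega\big)^{\frac\alpha\theta},c_2(t)^{\frac1\theta}\Big\}\Big(e^{\omega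 t}\|u_0\|_\ell+\int_0^te^{\omega(t-\tau)}\|g(\tau)\|_\ell d\tau\Big)^{\frac{\theta_\ell\gamma}\theta},$$ where $\theta_\ell=\frac{\frac1q-\frac1r}{\frac1\ell-\frac1r}$, $$N(t)=\sup_{s\in(0,t]}\frac{M(\frac s2)\|g\|_{L^1(\frac s2,s;L^q_\mu)}+c_2(\frac s2)^{\frac1\gamma}}{M(s)^{\frac1\theta}\big(e^{\omega s}\|u_0\|_\ell+\int_0^se^{\omega(s-\tau)}\|g(\tau)\|_\ell d\tau\big)^{\frac{\theta_\ell}\theta}},\qquad M(t)=\max\Big\{c_1(t)^{\frac1\gamma}\big(\tfrac1t+\omega\big)^{\frac\alpha\gamma},c_2(t)^{\frac1\gamma}\Big\}.$$
   Context: $L^q_\mu=L^q(\Sigma,\mu)$ with norm $\|\cdot\|_q$; $G_\lambda(s)=[|s|-\lambda]^+\mathrm{sign}(s)$; $1/r=0$ if $r=\infty$. *)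

theory Defs
  imports "HOL-Analysis.Analysis" "HOL-Probability.Essential_Supremum"
begin

definition exp_inv :: "ereal \<Rightarrow> real" where
  "exp_inv p = (if p = \<infinity> then 0 else 1 / real_of_ereal p)"

text \<open>L^p norm (real valued; meaningful for functions in L^p).\<close>
definition Lnorm :: "'a measure \<Rightarrow> ereal \<Rightarrow> ('a \<Rightarrow> real) \<Rightarrow> real" where
  "Lnorm M p f =
     (if p = \<infinity> then real_of_ereal (esssup M (\<lambda>x. ereal \<bar>f x\<bar>))
      else enn2real (\<integral>\<^sup>+ x. ennreal (\<bar>f x\<bar> powr real_of_ereal p) \<partial>M) powr (1 / real_of_ereal p))"

definition memLp :: "'a measure \<Rightarrow> ereal \<Rightarrow> ('a \<Rightarrow> real) \<Rightarrow> bool" where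
  "memLp M p f \<longleftrightarrow> f \<in> borel_measurable M \<and>
     (if p = \<infinity> then esssup M (\<lambda>x. ereal \<bar>f x\<bar>) < \<infinity>
      else (\<integral>\<^sup>+ x. ennreal (\<bar>f x\<bar> powr real_of_ereal p) \<partial>M) < \<infinity>)"

definition G :: "real \<Rightarrow> real \<Rightarrow> real" where
  "G lam s = max (\<bar>s\<bar> - lam) 0 * sgn s"

definition epowr :: "ennreal \<Rightarrow> real \<Rightarrow> ennreal" where
  "epowr x p = (if x = \<infinity> then \<infinity> else ennreal (enn2real x powr p))"

end

theory Submission
  imports Defs
begin

(* The truncation inequality at level 0 gives the L^l bound ||u(s)||_l <= E(s), and Hoelder
   interpolation between L^l and L^r turns the smoothing estimate into a recursion from s/2 to s
   for v(s) = ||u(s)||_r^(1/gamma):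
     v(s) <= A W(s) (v(s/2) / W(s/2))^(1 - theta) + b W(s),
   with weight W = M^(1/theta) E^(theta_l/theta), A = 2^(alpha/(gamma theta)) and b^theta the
   supremum of N^theta. The supremum psi of v/W over (0,t] therefore satisfies
   psi <= A psi^(1 - theta) + b, which forces psi <= (A + b^theta)^(1/theta). To make psi finite,
   E is first replaced by E + eps, and eps tends to 0 at the end. *)

lemma Lnorm_nonneg: "Lnorm M p f \<ge> 0"
proof (cases "p = \<infinity>")
  case True
  let ?F = "\<lambda>x. ereal \<bar>f x\<bar>"
  have "0 \<le> real_of_ereal (esssup M ?F)"
  proof (cases "emeasure M (space M) = 0 \<and> ?F \<in> borel_measurable M")
    case True
    then show ?thesis by (simp add: esssup_zero_space)
  next
    case False
    then consider "emeasure M (space M) \<noteq> 0" | "?F \<notin> borel_measurable M" by blast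
    then show ?thesis
    proof cases
      case 1
      then have "0 = esssup M (\<lambda>x. 0 :: ereal)" by (simp add: esssup_const)
      also have "\<dots> \<le> esssup M ?F" by (rule esssup_mono) auto
      finally show ?thesis by (simp add: real_of_ereal_pos)
    qed (simp add: esssup_non_measurable top_ereal_def)
  qed
  then show ?thesis using True by (simp add: Lnorm_def)
qed (simp add: Lnorm_def)

lemma G_zero [simp]: "G 0 s = s"
  by (simp add: G_def abs_mult_sgn)

lemma Lnorm_cmult:
  assumes "c \<ge> 0" "p > 0" "f \<in> borel_measurable M"
  shows "Lnorm M (ereal p) (\<lambda>x. c * f x) = c * Lnorm M (ereal p) f"
proof -
  have "(\<integral>\<^sup>+ x. ennreal (\<bar>c * f x\<bar> powr p) \<partial>M) = (\<integral>\<^sup>+ x. ennreal (c powr p) * ennreal (\<bar>f x\<bar> powr p) \<partial>M)"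
    using assms by (intro nn_integral_cong) (simp add: abs_mult powr_mult ennreal_mult)
  also have "\<dots> = ennreal (c powr p) * (\<integral>\<^sup>+ x. ennreal (\<bar>f x\<bar> powr p) \<partial>M)"
    using assms by (intro nn_integral_cmult) measurable
  finally show ?thesis
    using assms by (simp add: Lnorm_def enn2real_mult powr_mult powr_powr)
qed

lemma Lnorm_mono:
  assumes "\<And>x. \<bar>f x\<bar> \<le> \<bar>h x\<bar>" "memLp M (ereal p) h" "p > 0"
  shows "Lnorm M (ereal p) f \<le> Lnorm M (ereal p) h"
proof -
  have "(\<integral>\<^sup>+ x. ennreal (\<bar>f x\<bar> powr p) \<partial>M) \<le> (\<integral>\<^sup>+ x. ennreal (\<bar>h x\<bar> powr p) \<partial>M)"
    using assms by (intro nn_integral_mono ennreal_leI powr_mono2) auto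
  then have "enn2real (\<integral>\<^sup>+ x. ennreal (\<bar>f x\<bar> powr p) \<partial>M) \<le> enn2real (\<integral>\<^sup>+ x. ennreal (\<bar>h x\<bar> powr p) \<partial>M)"
    using assms by (intro enn2real_mono) (auto simp: memLp_def)
  then show ?thesis using assms by (simp add: Lnorm_def powr_mono2)
qed

lemma AE_zero_if_nn_integral_powr_eq_0:
  assumes "(\<integral>\<^sup>+ x. ennreal (\<bar>f x\<bar> powr p) \<partial>M) = 0" "f \<in> borel_measurable M"
  shows "AE x in M. f x = 0"
proof -
  have "AE x in M. ennreal (\<bar>f x\<bar> powr p) = 0"
    using assms by (subst (asm) nn_integral_0_iff_AE) auto
  then show ?thesis by eventually_elim simp
qed

lemma AE_zero_if_Lnorm_eq_0:
  assumes "Lnorm M (ereal p) f = 0" "memLp M (ereal p) f" "p > 0"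
  shows "AE x in M. f x = 0"
proof (rule AE_zero_if_nn_integral_powr_eq_0)
  show "(\<integral>\<^sup>+ x. ennreal (\<bar>f x\<bar> powr p) \<partial>M) = 0"
    using assms by (auto simp: Lnorm_def memLp_def enn2real_eq_0_iff)
qed (use assms in \<open>simp add: memLp_def\<close>)

lemma Lnorm_eq_0_if_AE_zero:
  assumes "AE x in M. f x = 0" "f \<in> borel_measurable M"
  shows "Lnorm M p f = 0"
proof (cases "p = \<infinity>")
  case True
  have "esssup M (\<lambda>x. ereal \<bar>f x\<bar>) \<le> 0"
    using assms by (intro esssup_I) (auto elim: eventually_mono)
  then have "real_of_ereal (esssup M (\<lambda>x. ereal \<bar>f x\<bar>)) \<le> 0"
    by (cases "esssup M (\<lambda>x. ereal \<bar>f x\<bar>)") auto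
  then have "Lnorm M p f \<le> 0" using True by (simp add: Lnorm_def)
  then show ?thesis using Lnorm_nonneg[of M p f] by simp
next
  case False
  have "(\<integral>\<^sup>+ x. ennreal (\<bar>f x\<bar> powr real_of_ereal p) \<partial>M) = (\<integral>\<^sup>+ x. 0 \<partial>M)"
    using assms by (intro nn_integral_cong_AE) (auto elim: eventually_mono)
  then show ?thesis using False by (simp add: Lnorm_def)
qed

lemma Young_powr_interpolation:
  fixes y A B a b l p q :: real
  assumes "y \<ge> 0" "A > 0" "B > 0" "a \<ge> 0" "b \<ge> 0" "a + b = 1" "l * a + p * b = q"
  shows "y powr q \<le> A powr a * B powr b * (a * (y powr l / A) + b * (y powr p / B))"
proof (cases "y = 0")
  case False
  with assms have "y > 0" by simp
  have "(y powr l / A) powr a * (y powr p / B) powr b \<le> a * (y powr l / A) + b * (y powr p / B)"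
    using assms \<open>y > 0\<close> by (intro Youngs_inequality_0) auto
  moreover have "(y powr l / A) powr a * (y powr p / B) powr b = y powr q / (A powr a * B powr b)"
    using assms False by (simp add: powr_divide powr_powr powr_add[symmetric] mult.commute)
  ultimately show ?thesis using assms by (simp add: divide_le_eq mult.commute)
qed (use assms in simp)

lemma nn_integral_powr_interpolation:
  fixes f :: "'a \<Rightarrow> real"
  assumes f: "f \<in> borel_measurable M"
    and A: "(\<integral>\<^sup>+ x. ennreal (\<bar>f x\<bar> powr l) \<partial>M) = ennreal A" "A > 0"
    and B: "(\<integral>\<^sup>+ x. ennreal (\<bar>f x\<bar> powr p) \<partial>M) = ennreal B" "B > 0"
    and ab: "a \<ge> 0" "b \<ge> 0" "a + b = 1" "l * a + p * b = q"
  shows "(\<integral>\<^sup>+ x. ennreal (\<bar>f x\<bar> powr q) \<partial>M) \<le> ennreal (A powr a * B powr b)"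
proof -
  define K where "K = A powr a * B powr b"
  have K: "K \<ge> 0" unfolding K_def by simp
  have "ennreal (\<bar>f x\<bar> powr q)
      \<le> ennreal (K * a / A) * ennreal (\<bar>f x\<bar> powr l) + ennreal (K * b / B) * ennreal (\<bar>f x\<bar> powr p)" for x
  proof -
    have "\<bar>f x\<bar> powr q \<le> K * (a * (\<bar>f x\<bar> powr l / A) + b * (\<bar>f x\<bar> powr p / B))"
      unfolding K_def using A B ab by (intro Young_powr_interpolation) auto
    also have "\<dots> = (K * a / A) * \<bar>f x\<bar> powr l + (K * b / B) * \<bar>f x\<bar> powr p"
      by (simp add: field_simps)
    finally show ?thesis using K A B ab
      by (simp add: ennreal_mult[symmetric] ennreal_plus[symmetric] del: ennreal_plus)
  qed
  then have "(\<integral>\<^sup>+ x. ennreal (\<bar>f x\<bar> powr q) \<partial>M)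
      \<le> (\<integral>\<^sup>+ x. ennreal (K * a / A) * ennreal (\<bar>f x\<bar> powr l) + ennreal (K * b / B) * ennreal (\<bar>f x\<bar> powr p) \<partial>M)"
    by (intro nn_integral_mono)
  also have "\<dots> = ennreal (K * a / A) * ennreal A + ennreal (K * b / B) * ennreal B"
    using f by (simp add: nn_integral_add nn_integral_cmult A B)
  also have "\<dots> = ennreal K"
    using K A B ab by (simp add: ennreal_mult[symmetric] ennreal_plus[symmetric] distrib_left[symmetric] del: ennreal_plus)
  finally show ?thesis unfolding K_def .
qed

lemma Lnorm_interpolation_finite:
  assumes f: "memLp M (ereal l) f" "memLp M (ereal p) f" and lqp: "0 < l" "l < q" "q < p"
  defines "\<eta> \<equiv> (1/q - 1/p) / (1/l - 1/p)"
  shows "Lnorm M (ereal q) f \<le> Lnorm M (ereal l) f powr \<eta> * Lnorm M (ereal p) f powr (1 - \<eta>)"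
proof -
  define A where "A = enn2real (\<integral>\<^sup>+ x. ennreal (\<bar>f x\<bar> powr l) \<partial>M)"
  define B where "B = enn2real (\<integral>\<^sup>+ x. ennreal (\<bar>f x\<bar> powr p) \<partial>M)"
  define a where "a = \<eta> * q / l"
  define b where "b = (1 - \<eta>) * q / p"
  have fm: "f \<in> borel_measurable M" using f by (simp add: memLp_def)
  have A_eq: "(\<integral>\<^sup>+ x. ennreal (\<bar>f x\<bar> powr l) \<partial>M) = ennreal A"
    and B_eq: "(\<integral>\<^sup>+ x. ennreal (\<bar>f x\<bar> powr p) \<partial>M) = ennreal B"
    using f unfolding A_def B_def memLp_def by auto
  have inv: "1/p < 1/q" "1/q < 1/l" using lqp by (auto simp: divide_strict_left_mono)
  then have \<eta>: "0 < \<eta>" "\<eta> < 1" "\<eta> * (1/l - 1/p) = 1/q - 1/p"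
    unfolding \<eta>_def by (auto simp: divide_less_eq_1)
  have ab: "a \<ge> 0" "b \<ge> 0" "l * a + p * b = q"
    using \<eta> lqp unfolding a_def b_def by (auto simp: field_simps)
  have "a + b = q * (\<eta> * (1/l - 1/p)) + q/p"
    unfolding a_def b_def using lqp by (simp add: field_simps)
  then have ab1: "a + b = 1" unfolding \<eta>(3) using lqp by (simp add: right_diff_distrib)
  have rhs: "Lnorm M (ereal l) f powr \<eta> * Lnorm M (ereal p) f powr (1 - \<eta>) = A powr (a/q) * B powr (b/q)"
    using lqp unfolding Lnorm_def a_def b_def A_def B_def by (simp add: powr_powr)
  show ?thesis
  proof (cases "A = 0 \<or> B = 0")
    case True
    then have "AE x in M. f x = 0"
      using fm A_eq B_eq by (auto intro: AE_zero_if_nn_integral_powr_eq_0)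
    then have "Lnorm M (ereal q) f = 0" using fm by (rule Lnorm_eq_0_if_AE_zero)
    then show ?thesis by simp
  next
    case False
    then have "A > 0" "B > 0" unfolding A_def B_def by (auto simp: order_less_le)
    then have "(\<integral>\<^sup>+ x. ennreal (\<bar>f x\<bar> powr q) \<partial>M) \<le> ennreal (A powr a * B powr b)"
      using fm A_eq B_eq ab ab1 by (intro nn_integral_powr_interpolation)
    then have "enn2real (\<integral>\<^sup>+ x. ennreal (\<bar>f x\<bar> powr q) \<partial>M) \<le> A powr a * B powr b"
      using enn2real_mono by fastforce
    then have "Lnorm M (ereal q) f \<le> (A powr a * B powr b) powr (1/q)"
      unfolding Lnorm_def using lqp by (simp add: powr_mono2)
    also have "\<dots> = A powr (a/q) * B powr (b/q)"
      unfolding A_def B_def by (simp add: powr_mult powr_powr)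
    finally show ?thesis using rhs by simp
  qed
qed

lemma Lnorm_interpolation_infinite:
  assumes f: "memLp M (ereal l) f" "memLp M \<infinity> f" and lq: "0 < l" "l < q"
  shows "Lnorm M (ereal q) f \<le> Lnorm M (ereal l) f powr (l/q) * Lnorm M \<infinity> f powr (1 - l/q)"
proof -
  define K where "K = Lnorm M \<infinity> f"
  define A where "A = enn2real (\<integral>\<^sup>+ x. ennreal (\<bar>f x\<bar> powr l) \<partial>M)"
  have K: "K \<ge> 0" unfolding K_def by (rule Lnorm_nonneg)
  have A: "A \<ge> 0" unfolding A_def by simp
  have "AE x in M. ereal \<bar>f x\<bar> \<le> esssup M (\<lambda>x. ereal \<bar>f x\<bar>)" by (rule esssup_AE)
  then have "AE x in M. \<bar>f x\<bar> \<le> K"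
  proof eventually_elim
    case (elim x)
    then show ?case using f unfolding K_def Lnorm_def memLp_def
      by (cases "esssup M (\<lambda>x. ereal \<bar>f x\<bar>)") auto
  qed
  then have "AE x in M. ennreal (\<bar>f x\<bar> powr q) \<le> ennreal (K powr (q - l)) * ennreal (\<bar>f x\<bar> powr l)"
  proof eventually_elim
    case (elim x)
    have "\<bar>f x\<bar> powr q = \<bar>f x\<bar> powr (q - l) * \<bar>f x\<bar> powr l" by (simp add: powr_add[symmetric])
    also have "\<dots> \<le> K powr (q - l) * \<bar>f x\<bar> powr l"
      using elim lq by (intro mult_right_mono powr_mono2) auto
    finally show ?case by (simp add: ennreal_mult[symmetric])
  qed
  then have "(\<integral>\<^sup>+ x. ennreal (\<bar>f x\<bar> powr q) \<partial>M) \<le> (\<integral>\<^sup>+ x. ennreal (K powr (q - l)) * ennreal (\<bar>f x\<bar> powr l) \<partial>M)"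
    by (rule nn_integral_mono_AE)
  also have "\<dots> = ennreal (K powr (q - l)) * (\<integral>\<^sup>+ x. ennreal (\<bar>f x\<bar> powr l) \<partial>M)"
    using f by (intro nn_integral_cmult) (auto simp: memLp_def)
  also have "\<dots> = ennreal (K powr (q - l) * A)"
    using f A unfolding A_def memLp_def by (simp add: ennreal_mult)
  finally have "enn2real (\<integral>\<^sup>+ x. ennreal (\<bar>f x\<bar> powr q) \<partial>M) \<le> K powr (q - l) * A"
    using enn2real_mono A by fastforce
  then have "Lnorm M (ereal q) f \<le> (K powr (q - l) * A) powr (1/q)"
    unfolding Lnorm_def using lq by (simp add: powr_mono2)
  also have "\<dots> = (A powr (1/l)) powr (l/q) * K powr (1 - l/q)"
    using lq A K by (simp add: powr_mult powr_powr diff_divide_distrib mult.commute)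
  finally show ?thesis unfolding K_def A_def Lnorm_def using lq by simp
qed

lemma exp_inv_bounds:
  assumes "q > 0" "ereal q < r"
  shows "0 \<le> exp_inv r" "exp_inv r < 1/q"
proof -
  have "0 \<le> exp_inv r \<and> exp_inv r < 1/q"
  proof (cases r)
    case (real p)
    then have "1/p < 1/q" using assms by (simp add: divide_strict_left_mono)
    then show ?thesis using assms real by (simp add: exp_inv_def)
  qed (use assms in \<open>auto simp: exp_inv_def\<close>)
  then show "0 \<le> exp_inv r" "exp_inv r < 1/q" by auto
qed

lemma Lnorm_interpolation:
  assumes f: "memLp M (ereal l) f" "memLp M r f" and lq: "0 < l" "l < q" "ereal q < r"
  defines "\<eta> \<equiv> (1/q - exp_inv r) / (1/l - exp_inv r)"
  shows "Lnorm M (ereal q) f \<le> Lnorm M (ereal l) f powr \<eta> * Lnorm M r f powr (1 - \<eta>)"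
proof (cases r)
  case (real p)
  then show ?thesis
    using Lnorm_interpolation_finite[OF f(1), of p q] f lq unfolding \<eta>_def by (simp add: exp_inv_def)
next
  case PInf
  then show ?thesis
    using Lnorm_interpolation_infinite[OF f(1), of q] f lq unfolding \<eta>_def by (simp add: exp_inv_def)
qed (use lq in simp)

lemma max_powr:
  fixes a b k :: real
  assumes "0 \<le> a" "0 \<le> b" "0 \<le> k"
  shows "max a b powr k = max (a powr k) (b powr k)"
  using assms powr_mono2[of k a b] powr_mono2[of k b a] by (auto simp: max_def)

lemma epowr_ennreal: "0 \<le> x \<Longrightarrow> epowr (ennreal x) p = ennreal (x powr p)"
  by (simp add: epowr_def)

lemma epowr_top [simp]: "epowr top p = top"
  by (simp add: epowr_def)

lemma epowr_mono:
  assumes "x \<le> y" "0 \<le> p"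
  shows "epowr x p \<le> epowr y p"
proof (cases "y = top")
  case False
  with assms have "x \<noteq> top" by (auto simp: top_unique)
  moreover have "enn2real x \<le> enn2real y" using assms False by (intro enn2real_mono) (auto simp: less_top)
  ultimately show ?thesis using False assms by (simp add: epowr_def powr_mono2 ennreal_leI)
qed simp

lemma set_integral_nonneg:
  fixes f :: "'a \<Rightarrow> real"
  assumes "\<And>x. x \<in> A \<Longrightarrow> 0 \<le> f x"
  shows "0 \<le> (LINT x:A|M. f x)"
  unfolding set_lebesgue_integral_def
  using assms by (intro integral_nonneg_AE AE_I2) (auto simp: indicator_def)

lemma set_integral_mono_subset:
  fixes f :: "'a \<Rightarrow> real"
  assumes "set_integrable M B f" "A \<in> sets M" "A \<subseteq> B" "\<And>x. x \<in> B \<Longrightarrow> 0 \<le> f x"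
  shows "(LINT x:A|M. f x) \<le> (LINT x:B|M. f x)"
  unfolding set_lebesgue_integral_def
proof (rule integral_mono)
  show "integrable M (\<lambda>x. indicat_real A x *\<^sub>R f x)"
    using set_integrable_subset[OF assms(1-3)] by (simp add: set_integrable_def)
  show "integrable M (\<lambda>x. indicat_real B x *\<^sub>R f x)"
    using assms(1) by (simp add: set_integrable_def)
qed (use assms(3,4) in \<open>auto simp: indicator_def\<close>)

lemma set_integrable_bounded_factor:
  fixes f h :: "'a \<Rightarrow> real"
  assumes f: "set_integrable M A f" and h: "h \<in> borel_measurable M"
    and K: "\<And>x. x \<in> A \<Longrightarrow> \<bar>h x\<bar> \<le> K"
  shows "set_integrable M A (\<lambda>x. h x * f x)"
proof (rule set_integrable_bound[of M A "\<lambda>x. K * f x"])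
  show "set_integrable M A (\<lambda>x. K * f x)" using f by simp
  have "(\<lambda>x. indicator A x *\<^sub>R f x) \<in> borel_measurable M"
    using f unfolding set_integrable_def by (rule borel_measurable_integrable)
  then have "(\<lambda>x. h x * (indicator A x *\<^sub>R f x)) \<in> borel_measurable M"
    using h by (intro borel_measurable_times)
  then show "set_borel_measurable M A (\<lambda>x. h x * f x)"
    unfolding set_borel_measurable_def by (simp add: mult.left_commute)
  show "AE x in M. x \<in> A \<longrightarrow> norm (h x * f x) \<le> norm (K * f x)"
  proof (intro AE_I2 impI)
    fix x assume "x \<in> A"
    then have "\<bar>h x\<bar> * \<bar>f x\<bar> \<le> \<bar>K\<bar> * \<bar>f x\<bar>"
      using K by (intro mult_right_mono) force+
    then show "norm (h x * f x) \<le> norm (K * f x)" by (simp add: abs_mult)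
  qed
qed

lemma powr_le_1_plus:
  fixes x k :: real
  assumes "0 \<le> x" "0 \<le> k" "k \<le> 1"
  shows "x powr k \<le> 1 + x"
proof (cases "x \<le> 1")
  case True
  then have "x powr k \<le> 1" using assms by (intro powr_le1) auto
  then show ?thesis using assms by simp
next
  case False
  then have "x powr k \<le> x powr 1" using assms by (intro powr_mono) auto
  then show ?thesis using False by simp
qed

lemma powr_fixpoint_bound:
  fixes \<psi> A b \<theta> :: real
  assumes \<theta>: "0 < \<theta>" "\<theta> < 1" and A: "A \<ge> 0" and b: "b \<ge> 0"
    and \<psi>: "\<psi> \<le> A * \<psi> powr (1 - \<theta>) + b"
  shows "\<psi> \<le> (A + b powr \<theta>) powr (1/\<theta>)"
proof (rule ccontr)
  define S where "S = A + b powr \<theta>"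
  have S: "S \<ge> 0" unfolding S_def using A by simp
  assume "\<not> ?thesis"
  then have gt: "S powr (1/\<theta>) < \<psi>" unfolding S_def by simp
  moreover have "0 \<le> S powr (1/\<theta>)" by simp
  ultimately have "\<psi> > 0" by linarith
  have "(S powr (1/\<theta>)) powr \<theta> < \<psi> powr \<theta>"
    using gt \<theta> by (intro powr_less_mono2) auto
  then have "S < \<psi> powr \<theta>" using S \<theta> by (simp add: powr_powr)
  then have "S * \<psi> powr (1 - \<theta>) < \<psi> powr \<theta> * \<psi> powr (1 - \<theta>)"
    using \<open>\<psi> > 0\<close> by (intro mult_strict_right_mono) auto
  also have "\<dots> = \<psi>" using \<open>\<psi> > 0\<close> by (simp add: powr_add[symmetric])
  finally have S\<psi>: "S * \<psi> powr (1 - \<theta>) < \<psi>" .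
  have "b \<le> b powr \<theta> * \<psi> powr (1 - \<theta>)"
  proof (cases "b = 0")
    case False
    with b have "b > 0" by simp
    have "b = (b powr \<theta>) powr (1/\<theta>)" using \<open>b > 0\<close> \<theta> by (simp add: powr_powr)
    also have "\<dots> \<le> S powr (1/\<theta>)" unfolding S_def using A \<theta> by (intro powr_mono2) auto
    finally have "b \<le> \<psi>" using gt by simp
    then have "b powr \<theta> * b powr (1 - \<theta>) \<le> b powr \<theta> * \<psi> powr (1 - \<theta>)"
      using \<open>b > 0\<close> \<theta> by (intro mult_left_mono powr_mono2) auto
    then show ?thesis using \<open>b > 0\<close> by (simp add: powr_add[symmetric])
  qed simp
  then have "A * \<psi> powr (1 - \<theta>) + b < \<psi>"
    using S\<psi> unfolding S_def by (simp add: algebra_simps)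
  with \<psi> show False by simp
qed

lemma halving_recursion_bound:
  fixes v W :: "real \<Rightarrow> real"
  assumes \<theta>: "0 < \<theta>" "\<theta> < 1" and A: "A \<ge> 0" and b: "b \<ge> 0" and t: "t > 0"
    and W: "\<And>s. s \<in> {0<..t} \<Longrightarrow> W s > 0" and v: "\<And>s. s \<in> {0<..t} \<Longrightarrow> v s \<ge> 0"
    and bdd: "bdd_above ((\<lambda>s. v s / W s) ` {0<..t})"
    and rec: "\<And>s. s \<in> {0<..t} \<Longrightarrow> v s \<le> A * W s * (v (s/2) / W (s/2)) powr (1 - \<theta>) + b * W s"
  shows "v t \<le> (A + b powr \<theta>) powr (1/\<theta>) * W t"
proof -
  define \<psi> where "\<psi> = (SUP s\<in>{0<..t}. v s / W s)"
  have t_in: "t \<in> {0<..t}" using t by simp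
  have le_\<psi>: "v s / W s \<le> \<psi>" if "s \<in> {0<..t}" for s
    unfolding \<psi>_def using that bdd by (rule cSUP_upper)
  have "v s / W s \<le> A * \<psi> powr (1 - \<theta>) + b" if s: "s \<in> {0<..t}" for s
  proof -
    have s2: "s/2 \<in> {0<..t}" using s by auto
    have "(v (s/2) / W (s/2)) powr (1 - \<theta>) \<le> \<psi> powr (1 - \<theta>)"
      using le_\<psi>[OF s2] v[OF s2] W[OF s2] \<theta> by (intro powr_mono2) auto
    then have "A * W s * (v (s/2) / W (s/2)) powr (1 - \<theta>) \<le> A * W s * \<psi> powr (1 - \<theta>)"
      using W[OF s] A by (intro mult_left_mono) auto
    then have "v s \<le> W s * (A * \<psi> powr (1 - \<theta>) + b)"
      using rec[OF s] by (simp add: algebra_simps)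
    then show ?thesis using W[OF s] by (simp add: divide_le_eq mult.commute)
  qed
  then have "\<psi> \<le> A * \<psi> powr (1 - \<theta>) + b"
    unfolding \<psi>_def using t_in by (intro cSUP_least) auto
  then have "\<psi> \<le> (A + b powr \<theta>) powr (1/\<theta>)"
    by (rule powr_fixpoint_bound[OF \<theta> A b])
  with le_\<psi>[OF t_in] have "v t / W t \<le> (A + b powr \<theta>) powr (1/\<theta>)" by simp
  then show ?thesis using W[OF t_in] by (simp add: divide_le_eq)
qed

(* Of the truncation inequality of the theorem only the instance lambda = 0, s = 0 is needed
   (L_l_growth). *)
locale extrapolation =
  fixes M :: "'a measure" and l q T \<omega> \<alpha> \<gamma> \<gamma>s :: real and r :: ereal
    and u g :: "real \<Rightarrow> 'a \<Rightarrow> real" and c1 c2 :: "real \<Rightarrow> real"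
  assumes exps: "0 < l" "l < q" "ereal q < r" and T_pos: "0 < T" and \<omega>_nonneg: "0 \<le> \<omega>"
    and g_memLp: "AE \<tau> in lborel. \<tau> \<in> {0..T} \<longrightarrow> memLp M (ereal l) (g \<tau>)"
    and g_integrable: "set_integrable lborel {0..T} (\<lambda>\<tau>. Lnorm M (ereal l) (g \<tau>))"
    and u_memLp: "\<And>t. t \<in> {0..T} \<Longrightarrow> memLp M (ereal l) (u t) \<and> memLp M r (u t)"
    and u_bounded: "\<exists>C. \<forall>t\<in>{0..T}. Lnorm M r (u t) \<le> C"
    and L_l_growth: "\<And>t. t \<in> {0..T} \<Longrightarrow>
        Lnorm M (ereal l) (\<lambda>x. exp (-\<omega> * t) * u t x) \<le> Lnorm M (ereal l) (u 0)
          + (LINT \<tau>:{0..t}|lborel. exp (-\<omega> * \<tau>) *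
               Lnorm M (ereal l) (\<lambda>x. g \<tau> x * indicator {y. exp (-\<omega> * \<tau>) * \<bar>u \<tau> y\<bar> > 0} x))"
    and c1_mono: "mono_on {0..T} c1" and c2_mono: "mono_on {0..T} c2"
    and c1_pos: "\<And>t. t \<in> {0..T} \<Longrightarrow> 0 < c1 t" and c2_nonneg: "\<And>t. t \<in> {0..T} \<Longrightarrow> 0 \<le> c2 t"
    and \<alpha>_nonneg: "0 \<le> \<alpha>" and \<gamma>: "0 < \<gamma>s" "\<gamma>s \<le> \<gamma>"
    and smoothing: "\<And>t. t \<in> {0<..T} \<Longrightarrow>
        Lnorm M r (u t) \<le> max
          (c1 (t/2) * (2/t + \<omega>) powr \<alpha> *
             (Lnorm M (ereal q) (u (t/2)) + (LINT \<tau>:{t/2..t}|lborel. Lnorm M (ereal q) (g \<tau>))) powr \<gamma>)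
          (c2 (t/2) *
             (Lnorm M (ereal q) (u (t/2)) + (LINT \<tau>:{t/2..t}|lborel. Lnorm M (ereal q) (g \<tau>))) powr \<gamma>s)"
    and \<theta>_pos: "0 < 1 - \<gamma> * (1/l - 1/q) / (1/l - exp_inv r)"
begin

definition \<theta> where "\<theta> = 1 - \<gamma> * (1/l - 1/q) / (1/l - exp_inv r)"
definition \<theta>l where "\<theta>l = (1/q - exp_inv r) / (1/l - exp_inv r)"
definition E where
  "E = (\<lambda>s. exp (\<omega> * s) * Lnorm M (ereal l) (u 0)
          + (LINT \<tau>:{0..s}|lborel. exp (\<omega> * (s - \<tau>)) * Lnorm M (ereal l) (g \<tau>)))"
definition Mf where "Mf = (\<lambda>s. max (c1 s powr (1/\<gamma>) * (1/s + \<omega>) powr (\<alpha>/\<gamma>)) (c2 s powr (1/\<gamma>)))"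
definition gq where "gq = (\<lambda>a b. LINT \<tau>:{a..b}|lborel. Lnorm M (ereal q) (g \<tau>))"
definition forcing where "forcing s = Mf (s/2) * gq (s/2) s + c2 (s/2) powr (1/\<gamma>)"
definition N where
  "N = (\<lambda>s. SUP s'\<in>{0<..s}. ennreal (forcing s') / ennreal (Mf s' powr (1/\<theta>) * E s' powr (\<theta>l/\<theta>)))"

lemma \<gamma>_pos: "0 < \<gamma>"
  using \<gamma> by linarith

lemma exponent_relations: "0 < \<theta>" "\<theta> < 1" "0 < \<theta>l" "\<gamma> * (1 - \<theta>l) = 1 - \<theta>"
proof -
  have "1/q < 1/l" using exps by (simp add: divide_strict_left_mono)
  moreover have "0 \<le> exp_inv r" "exp_inv r < 1/q" using exp_inv_bounds[of q r] exps by auto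
  ultimately have D: "0 < 1/l - exp_inv r" "0 < 1/q - exp_inv r" "0 < 1/l - 1/q" by auto
  then have "0 < \<gamma> * (1/l - 1/q) / (1/l - exp_inv r)" using \<gamma>_pos by simp
  then show "0 < \<theta>" "\<theta> < 1" using \<theta>_pos unfolding \<theta>_def by auto
  show "0 < \<theta>l" using D unfolding \<theta>l_def by simp
  show "\<gamma> * (1 - \<theta>l) = 1 - \<theta>" using D unfolding \<theta>_def \<theta>l_def by (simp add: field_simps)
qed

lemma u_measurable: "t \<in> {0..T} \<Longrightarrow> u t \<in> borel_measurable M"
  using u_memLp by (auto simp: memLp_def)

lemma set_integrable_damped_g:
  "s \<le> T \<Longrightarrow> set_integrable lborel {0..s} (\<lambda>\<tau>. exp (-\<omega> * \<tau>) * Lnorm M (ereal l) (g \<tau>))"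
proof (rule set_integrable_bounded_factor[where K = 1])
  assume "s \<le> T"
  then show "set_integrable lborel {0..s} (\<lambda>\<tau>. Lnorm M (ereal l) (g \<tau>))"
    by (intro set_integrable_subset[OF g_integrable]) auto
qed (use \<omega>_nonneg in auto)

lemma E_eq:
  "E s = exp (\<omega> * s) * (Lnorm M (ereal l) (u 0)
           + (LINT \<tau>:{0..s}|lborel. exp (-\<omega> * \<tau>) * Lnorm M (ereal l) (g \<tau>)))"
proof -
  have "exp (\<omega> * (s - \<tau>)) = exp (\<omega> * s) * exp (-\<omega> * \<tau>)" for \<tau>
    by (simp add: exp_add[symmetric] algebra_simps)
  then show ?thesis unfolding E_def by (simp only: mult.assoc set_integral_mult_right distrib_left)
qed

lemma E_nonneg: "0 \<le> E s"
  unfolding E_eq by (auto intro!: mult_nonneg_nonneg add_nonneg_nonneg set_integral_nonneg Lnorm_nonneg)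

lemma E_mono:
  assumes "0 \<le> \<sigma>" "\<sigma> \<le> s" "s \<le> T"
  shows "E \<sigma> \<le> E s"
proof -
  have "(LINT \<tau>:{0..\<sigma>}|lborel. exp (-\<omega> * \<tau>) * Lnorm M (ereal l) (g \<tau>))
      \<le> (LINT \<tau>:{0..s}|lborel. exp (-\<omega> * \<tau>) * Lnorm M (ereal l) (g \<tau>))"
    using assms by (intro set_integral_mono_subset set_integrable_damped_g) (auto simp: Lnorm_nonneg)
  moreover have "exp (\<omega> * \<sigma>) \<le> exp (\<omega> * s)"
    using assms \<omega>_nonneg by (simp add: mult_left_mono)
  ultimately show ?thesis unfolding E_eq
    by (auto intro!: mult_mono add_left_mono add_nonneg_nonneg set_integral_nonneg mult_nonneg_nonneg Lnorm_nonneg)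
qed

lemma Lnorm_l_le_E:
  assumes t: "t \<in> {0..T}"
  shows "Lnorm M (ereal l) (u t) \<le> E t"
proof -
  let ?Lg = "\<lambda>\<tau>. Lnorm M (ereal l) (g \<tau>)"
  let ?J = "\<lambda>\<tau>. exp (-\<omega> * \<tau>) *
    Lnorm M (ereal l) (\<lambda>x. g \<tau> x * indicator {y. exp (-\<omega> * \<tau>) * \<bar>u \<tau> y\<bar> > 0} x)"
  (* ?J need not be integrable (no joint measurability is assumed); if it is not, its integral is 0. *)
  have J: "(LINT \<tau>:{0..t}|lborel. ?J \<tau>) \<le> (LINT \<tau>:{0..t}|lborel. exp (-\<omega> * \<tau>) * ?Lg \<tau>)"
  proof (cases "set_integrable lborel {0..t} ?J")
    case True
    show ?thesis
    proof (rule set_integral_mono_AE[OF True set_integrable_damped_g])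
      show "AE \<tau>\<in>{0..t} in lborel. ?J \<tau> \<le> exp (-\<omega> * \<tau>) * ?Lg \<tau>"
        using g_memLp
      proof eventually_elim
        case (elim \<tau>)
        show ?case
        proof
          assume "\<tau> \<in> {0..t}"
          then have "memLp M (ereal l) (g \<tau>)" using elim t by auto
          then show "?J \<tau> \<le> exp (-\<omega> * \<tau>) * ?Lg \<tau>"
            using exps by (intro mult_left_mono Lnorm_mono) (auto simp: indicator_def)
        qed
      qed
    qed (use t in auto)
  next
    case False
    then have "(LINT \<tau>:{0..t}|lborel. ?J \<tau>) = 0"
      unfolding set_lebesgue_integral_def set_integrable_def by (rule not_integrable_integral_eq)
    then show ?thesis by (auto intro!: set_integral_nonneg simp: Lnorm_nonneg)
  qed
  have "exp (-\<omega> * t) * Lnorm M (ereal l) (u t) \<le> Lnorm M (ereal l) (u 0) + (LINT \<tau>:{0..t}|lborel. ?J \<tau>)"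
    using L_l_growth[OF t] Lnorm_cmult[of "exp (-\<omega> * t)" l "u t" M] exps u_measurable[OF t] by simp
  then have "exp (\<omega> * t) * (exp (-\<omega> * t) * Lnorm M (ereal l) (u t)) \<le> E t"
    unfolding E_eq using J by (intro mult_left_mono) auto
  then show ?thesis by (simp add: exp_minus_inverse mult.assoc[symmetric])
qed

lemma Mf_nonneg: "0 \<le> Mf s"
  unfolding Mf_def by (simp add: le_max_iff_disj)

lemma gq_nonneg: "0 \<le> gq a b"
  unfolding gq_def by (intro set_integral_nonneg Lnorm_nonneg)

lemma Mf_lower_bound:
  obtains m where "0 < m" "\<And>s. s \<in> {0<..T} \<Longrightarrow> m \<le> Mf s"
proof
  show "0 < c1 0 powr (1/\<gamma>) * (1/T) powr (\<alpha>/\<gamma>)" using c1_pos[of 0] T_pos by simp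
  fix s assume s: "s \<in> {0<..T}"
  have "c1 0 \<le> c1 s" using s by (intro mono_onD[OF c1_mono]) auto
  then have "c1 0 powr (1/\<gamma>) \<le> c1 s powr (1/\<gamma>)"
    using c1_pos[of 0] T_pos \<gamma>_pos by (intro powr_mono2) auto
  moreover have "(1/T) powr (\<alpha>/\<gamma>) \<le> (1/s + \<omega>) powr (\<alpha>/\<gamma>)"
    using s \<omega>_nonneg \<alpha>_nonneg \<gamma>_pos by (intro powr_mono2 add_increasing2 divide_left_mono) auto
  ultimately show "c1 0 powr (1/\<gamma>) * (1/T) powr (\<alpha>/\<gamma>) \<le> Mf s"
    unfolding Mf_def by (intro max.coboundedI1 mult_mono) auto
qed

lemma Mf_half:
  assumes s: "s \<in> {0<..T}"
  shows "Mf (s/2) \<le> 2 powr (\<alpha>/\<gamma>) * Mf s"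
proof -
  have two: "1 \<le> 2 powr (\<alpha>/\<gamma>)" using \<alpha>_nonneg \<gamma>_pos by (intro ge_one_powr_ge_zero) auto
  have Mf_ge: "c1 s powr (1/\<gamma>) * (1/s + \<omega>) powr (\<alpha>/\<gamma>) \<le> Mf s" "c2 s powr (1/\<gamma>) \<le> Mf s"
    unfolding Mf_def by simp_all
  have "c1 (s/2) \<le> c1 s" using s by (intro mono_onD[OF c1_mono]) auto
  then have c1: "c1 (s/2) powr (1/\<gamma>) \<le> c1 s powr (1/\<gamma>)"
    using c1_pos[of "s/2"] s \<gamma>_pos by (intro powr_mono2) auto
  have "(1/(s/2) + \<omega>) powr (\<alpha>/\<gamma>) \<le> (2 * (1/s + \<omega>)) powr (\<alpha>/\<gamma>)"
    using s \<omega>_nonneg \<gamma>_pos \<alpha>_nonneg by (intro powr_mono2) auto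
  also have "\<dots> = 2 powr (\<alpha>/\<gamma>) * (1/s + \<omega>) powr (\<alpha>/\<gamma>)"
    using s \<omega>_nonneg by (intro powr_mult)
  finally have "c1 (s/2) powr (1/\<gamma>) * (1/(s/2) + \<omega>) powr (\<alpha>/\<gamma>)
      \<le> c1 s powr (1/\<gamma>) * (2 powr (\<alpha>/\<gamma>) * (1/s + \<omega>) powr (\<alpha>/\<gamma>))"
    using c1 by (intro mult_mono) auto
  also have "\<dots> \<le> 2 powr (\<alpha>/\<gamma>) * Mf s"
    using Mf_ge(1) by (simp add: mult.left_commute)
  finally have A1: "c1 (s/2) powr (1/\<gamma>) * (1/(s/2) + \<omega>) powr (\<alpha>/\<gamma>) \<le> 2 powr (\<alpha>/\<gamma>) * Mf s" .
  have "c2 (s/2) \<le> c2 s" using s by (intro mono_onD[OF c2_mono]) auto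
  then have "c2 (s/2) powr (1/\<gamma>) \<le> c2 s powr (1/\<gamma>)"
    using c2_nonneg[of "s/2"] s \<gamma>_pos by (intro powr_mono2) auto
  also have "\<dots> \<le> Mf s" by (rule Mf_ge(2))
  also have "\<dots> \<le> 2 powr (\<alpha>/\<gamma>) * Mf s"
    using two Mf_nonneg[of s] by (simp add: mult_le_cancel_right1)
  finally have A2: "c2 (s/2) powr (1/\<gamma>) \<le> 2 powr (\<alpha>/\<gamma>) * Mf s" .
  have "Mf (s/2) = max (c1 (s/2) powr (1/\<gamma>) * (1/(s/2) + \<omega>) powr (\<alpha>/\<gamma>)) (c2 (s/2) powr (1/\<gamma>))"
    by (simp only: Mf_def)
  then show ?thesis using A1 A2 by simp
qed

lemma Mf_powr:
  assumes t: "t \<in> {0<..T}"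
  shows "Mf t powr (\<gamma>/\<theta>) = max (c1 t powr (1/\<theta>) * (1/t + \<omega>) powr (\<alpha>/\<theta>)) (c2 t powr (1/\<theta>))"
proof -
  have "1/\<gamma> * (\<gamma>/\<theta>) = 1/\<theta>" "\<alpha>/\<gamma> * (\<gamma>/\<theta>) = \<alpha>/\<theta>" using \<gamma>_pos by auto
  then show ?thesis
    unfolding Mf_def using exponent_relations(1) \<gamma>_pos t \<omega>_nonneg c1_pos[of t] c2_nonneg[of t]
    by (subst max_powr) (auto simp: powr_mult powr_powr)
qed

lemma smoothing_root:
  assumes s: "s \<in> {0<..T}"
  shows "Lnorm M r (u s) powr (1/\<gamma>) \<le> Mf (s/2) * Lnorm M (ereal q) (u (s/2)) + forcing s"
proof -
  define X where "X = Lnorm M (ereal q) (u (s/2)) + gq (s/2) s"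
  define P1 where "P1 = c1 (s/2) * (2/s + \<omega>) powr \<alpha> * X powr \<gamma>"
  define P2 where "P2 = c2 (s/2) * X powr \<gamma>s"
  have X: "0 \<le> X" unfolding X_def by (intro add_nonneg_nonneg gq_nonneg Lnorm_nonneg)
  have s2: "s/2 \<in> {0..T}" using s by auto
  have P: "0 \<le> P1" "0 \<le> P2" unfolding P1_def P2_def using c1_pos[OF s2] c2_nonneg[OF s2] by auto
  have "Lnorm M r (u s) powr (1/\<gamma>) \<le> max P1 P2 powr (1/\<gamma>)"
    using smoothing[OF s] \<gamma>_pos unfolding X_def gq_def P1_def P2_def
    by (intro powr_mono2) (auto simp: Lnorm_nonneg)
  also have "\<dots> = max (P1 powr (1/\<gamma>)) (P2 powr (1/\<gamma>))"
    using P \<gamma>_pos by (intro max_powr) auto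
  also have "\<dots> \<le> Mf (s/2) * X + c2 (s/2) powr (1/\<gamma>)"
  proof (rule max.boundedI)
    have "P1 powr (1/\<gamma>) = c1 (s/2) powr (1/\<gamma>) * (2/s + \<omega>) powr (\<alpha>/\<gamma>) * X"
      unfolding P1_def using c1_pos[OF s2] X \<gamma>_pos s \<omega>_nonneg by (simp add: powr_mult powr_powr)
    also have "\<dots> \<le> Mf (s/2) * X" unfolding Mf_def using X by (intro mult_right_mono) auto
    finally show "P1 powr (1/\<gamma>) \<le> Mf (s/2) * X + c2 (s/2) powr (1/\<gamma>)"
      by (rule add_increasing2[OF powr_ge_zero])
  next
    have "P2 powr (1/\<gamma>) = c2 (s/2) powr (1/\<gamma>) * X powr (\<gamma>s/\<gamma>)"
      unfolding P2_def using c2_nonneg[OF s2] X \<gamma>_pos by (simp add: powr_mult powr_powr)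
    also have "\<dots> \<le> c2 (s/2) powr (1/\<gamma>) * (1 + X)"
      using X \<gamma> \<gamma>_pos by (intro mult_left_mono powr_le_1_plus) auto
    also have "\<dots> \<le> c2 (s/2) powr (1/\<gamma>) + Mf (s/2) * X"
      using X unfolding Mf_def by (simp add: distrib_left mult_right_mono)
    finally show "P2 powr (1/\<gamma>) \<le> Mf (s/2) * X + c2 (s/2) powr (1/\<gamma>)" by simp
  qed
  finally show ?thesis unfolding X_def forcing_def by (simp add: algebra_simps)
qed

lemma Lnorm_r_eq_0_if_E_eq_0:
  assumes t: "t \<in> {0..T}" and "E t = 0"
  shows "Lnorm M r (u t) = 0"
proof -
  have "Lnorm M (ereal l) (u t) = 0"
    using Lnorm_l_le_E[OF t] assms Lnorm_nonneg[of M "ereal l" "u t"] by simp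
  then have "AE x in M. u t x = 0"
    using u_memLp[OF t] exps by (intro AE_zero_if_Lnorm_eq_0) auto
  then show ?thesis using u_measurable[OF t] by (rule Lnorm_eq_0_if_AE_zero)
qed

(* The slack eps > 0 keeps the weight away from 0, so that rnorm_root / weight is bounded. *)
definition weight where "weight \<epsilon> s = Mf s powr (1/\<theta>) * (E s + \<epsilon>) powr (\<theta>l/\<theta>)"
definition rnorm_root where "rnorm_root s = Lnorm M r (u s) powr (1/\<gamma>)"

lemma rnorm_root_powr: "rnorm_root s powr \<gamma> = Lnorm M r (u s)"
  unfolding rnorm_root_def using \<gamma>_pos Lnorm_nonneg[of M r "u s"] by (simp add: powr_powr)

lemma weight_powr_\<theta>: "0 \<le> \<epsilon> \<Longrightarrow> weight \<epsilon> s powr \<theta> = Mf s * (E s + \<epsilon>) powr \<theta>l"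
  unfolding weight_def using exponent_relations(1) Mf_nonneg[of s] E_nonneg[of s] by (simp add: powr_mult powr_powr)

lemma weight_half:
  assumes s: "s \<in> {0<..T}" and \<epsilon>: "0 \<le> \<epsilon>"
  shows "weight \<epsilon> (s/2) \<le> 2 powr (\<alpha>/(\<gamma>*\<theta>)) * weight \<epsilon> s"
proof -
  have "Mf (s/2) powr (1/\<theta>) \<le> (2 powr (\<alpha>/\<gamma>) * Mf s) powr (1/\<theta>)"
    using Mf_half[OF s] Mf_nonneg exponent_relations(1) by (intro powr_mono2) auto
  also have "\<dots> = 2 powr (\<alpha>/(\<gamma>*\<theta>)) * Mf s powr (1/\<theta>)"
    using Mf_nonneg[of s] by (simp add: powr_mult powr_powr)
  finally have "Mf (s/2) powr (1/\<theta>) \<le> 2 powr (\<alpha>/(\<gamma>*\<theta>)) * Mf s powr (1/\<theta>)" .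
  moreover have "(E (s/2) + \<epsilon>) powr (\<theta>l/\<theta>) \<le> (E s + \<epsilon>) powr (\<theta>l/\<theta>)"
    using s \<epsilon> E_mono[of "s/2" s] E_nonneg[of "s/2"] exponent_relations by (intro powr_mono2) auto
  ultimately show ?thesis
    unfolding weight_def mult.assoc[symmetric] by (intro mult_mono) auto
qed

lemma weight_lower_bound:
  assumes "0 < \<epsilon>"
  obtains w where "0 < w" "\<And>s. s \<in> {0<..T} \<Longrightarrow> w \<le> weight \<epsilon> s"
proof -
  obtain m where m: "0 < m" "\<And>s. s \<in> {0<..T} \<Longrightarrow> m \<le> Mf s"
    using Mf_lower_bound by blast
  show ?thesis
  proof
    show "0 < m powr (1/\<theta>) * \<epsilon> powr (\<theta>l/\<theta>)" using m assms by simp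
    fix s assume s: "s \<in> {0<..T}"
    have "m powr (1/\<theta>) \<le> Mf s powr (1/\<theta>)"
      using m(1) m(2)[OF s] exponent_relations(1) by (intro powr_mono2) auto
    moreover have "\<epsilon> powr (\<theta>l/\<theta>) \<le> (E s + \<epsilon>) powr (\<theta>l/\<theta>)"
      using assms E_nonneg[of s] exponent_relations by (intro powr_mono2) auto
    ultimately show "m powr (1/\<theta>) * \<epsilon> powr (\<theta>l/\<theta>) \<le> weight \<epsilon> s"
      unfolding weight_def by (intro mult_mono) auto
  qed
qed

lemma Lnorm_q_bound:
  assumes s: "s \<in> {0..T}" and \<epsilon>: "0 \<le> \<epsilon>"
  shows "Lnorm M (ereal q) (u s) \<le> (E s + \<epsilon>) powr \<theta>l * rnorm_root s powr (1 - \<theta>)"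
proof -
  have "Lnorm M (ereal q) (u s) \<le> Lnorm M (ereal l) (u s) powr \<theta>l * Lnorm M r (u s) powr (1 - \<theta>l)"
    unfolding \<theta>l_def using u_memLp[OF s] exps by (intro Lnorm_interpolation) auto
  also have "\<dots> \<le> (E s + \<epsilon>) powr \<theta>l * Lnorm M r (u s) powr (1 - \<theta>l)"
    using Lnorm_l_le_E[OF s] \<epsilon> exponent_relations(3) Lnorm_nonneg
    by (intro mult_right_mono powr_mono2) auto
  also have "Lnorm M r (u s) powr (1 - \<theta>l) = rnorm_root s powr (1 - \<theta>)"
    using exponent_relations(4) by (simp add: rnorm_root_powr[symmetric] powr_powr)
  finally show ?thesis .
qed

lemma recursion_step:
  assumes s: "s \<in> {0<..T}" and \<epsilon>: "0 < \<epsilon>"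
  shows "rnorm_root s \<le>
    2 powr (\<alpha>/(\<gamma>*\<theta>)) * weight \<epsilon> s * (rnorm_root (s/2) / weight \<epsilon> (s/2)) powr (1 - \<theta>) + forcing s"
proof -
  define w where "w = weight \<epsilon> (s/2)"
  define R where "R = (rnorm_root (s/2) / w) powr (1 - \<theta>)"
  obtain w0 where "0 < w0" "\<And>s. s \<in> {0<..T} \<Longrightarrow> w0 \<le> weight \<epsilon> s"
    using weight_lower_bound[OF \<epsilon>] by blast
  moreover have "s/2 \<in> {0<..T}" using s by auto
  ultimately have "w > 0" unfolding w_def by (meson less_le_trans)
  have R: "R = rnorm_root (s/2) powr (1 - \<theta>) / w powr (1 - \<theta>)"
    unfolding R_def using \<open>w > 0\<close> by (simp add: powr_divide rnorm_root_def)
  have wR: "w powr \<theta> * rnorm_root (s/2) powr (1 - \<theta>) = w * R"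
  proof -
    have "w * R = (w powr \<theta> * w powr (1 - \<theta>)) * (rnorm_root (s/2) powr (1 - \<theta>) / w powr (1 - \<theta>))"
      unfolding R using \<open>w > 0\<close> by (simp add: powr_add[symmetric])
    also have "\<dots> = w powr \<theta> * rnorm_root (s/2) powr (1 - \<theta>)"
      using \<open>w > 0\<close> by (simp add: field_simps)
    finally show ?thesis by simp
  qed
  have "rnorm_root s \<le> Mf (s/2) * Lnorm M (ereal q) (u (s/2)) + forcing s"
    using smoothing_root[OF s] unfolding rnorm_root_def .
  also have "Mf (s/2) * Lnorm M (ereal q) (u (s/2))
      \<le> Mf (s/2) * ((E (s/2) + \<epsilon>) powr \<theta>l * rnorm_root (s/2) powr (1 - \<theta>))"
    using s \<epsilon> Mf_nonneg by (intro mult_left_mono Lnorm_q_bound) auto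
  also have "\<dots> = w powr \<theta> * rnorm_root (s/2) powr (1 - \<theta>)"
    unfolding w_def using \<epsilon> by (simp add: weight_powr_\<theta> mult.assoc)
  also have "\<dots> = w * R"
    by (rule wR)
  also have "\<dots> \<le> 2 powr (\<alpha>/(\<gamma>*\<theta>)) * weight \<epsilon> s * R"
    unfolding w_def R_def using weight_half[OF s] \<epsilon> by (intro mult_right_mono) auto
  finally show ?thesis unfolding R_def w_def by simp
qed

lemma bound_with_slack:
  assumes t: "t \<in> {0<..T}" and \<epsilon>: "0 < \<epsilon>" and K: "0 \<le> K"
    and forcing_le: "\<And>s. s \<in> {0<..t} \<Longrightarrow> forcing s \<le> K * weight \<epsilon> s"
  shows "rnorm_root t \<le> (2 powr (\<alpha>/(\<gamma>*\<theta>)) + K powr \<theta>) powr (1/\<theta>) * weight \<epsilon> t"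
proof (rule halving_recursion_bound[where v = rnorm_root and W = "weight \<epsilon>", OF exponent_relations(1,2)])
  obtain w where w: "0 < w" "\<And>s. s \<in> {0<..T} \<Longrightarrow> w \<le> weight \<epsilon> s"
    using weight_lower_bound[OF \<epsilon>] by blast
  obtain C where C: "\<And>s. s \<in> {0..T} \<Longrightarrow> Lnorm M r (u s) \<le> C"
    using u_bounded by blast
  have sub: "s \<in> {0<..T}" if "s \<in> {0<..t}" for s using that t by auto
  show pos: "0 < weight \<epsilon> s" if "s \<in> {0<..t}" for s
    using w sub[OF that] by (meson less_le_trans)
  show "0 \<le> rnorm_root s" for s unfolding rnorm_root_def by simp
  show "bdd_above ((\<lambda>s. rnorm_root s / weight \<epsilon> s) ` {0<..t})"
  proof (rule bdd_aboveI2)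
    fix s assume s: "s \<in> {0<..t}"
    have "rnorm_root s \<le> max C 0 powr (1/\<gamma>)"
      unfolding rnorm_root_def using C[of s] sub[OF s] \<gamma>_pos by (intro powr_mono2) (auto simp: Lnorm_nonneg)
    then show "rnorm_root s / weight \<epsilon> s \<le> max C 0 powr (1/\<gamma>) / w"
      using w sub[OF s] by (intro frac_le) (auto simp: rnorm_root_def)
  qed
  show "rnorm_root s \<le> 2 powr (\<alpha>/(\<gamma>*\<theta>)) * weight \<epsilon> s * (rnorm_root (s/2) / weight \<epsilon> (s/2)) powr (1 - \<theta>)
      + K * weight \<epsilon> s" if "s \<in> {0<..t}" for s
    using recursion_step[OF sub[OF that] \<epsilon>] forcing_le[OF that] by simp
qed (use K t exponent_relations \<alpha>_nonneg in auto)

lemma Lnorm_r_bound: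
  assumes t: "t \<in> {0<..T}" and E_pos: "0 < E t" and K: "0 \<le> K"
    and forcing_le: "\<And>s. s \<in> {0<..t} \<Longrightarrow> forcing s \<le> K * (Mf s powr (1/\<theta>) * E s powr (\<theta>l/\<theta>))"
  shows "Lnorm M r (u t) \<le> (2 powr (\<alpha>/(\<gamma>*\<theta>)) + K powr \<theta>) powr (\<gamma>/\<theta>) * Mf t powr (\<gamma>/\<theta>) * E t powr (\<theta>l*\<gamma>/\<theta>)"
proof -
  define S where "S = 2 powr (\<alpha>/(\<gamma>*\<theta>)) + K powr \<theta>"
  have S: "0 \<le> S" unfolding S_def by simp
  have slack: "Lnorm M r (u t) \<le> S powr (\<gamma>/\<theta>) * Mf t powr (\<gamma>/\<theta>) * (E t + \<epsilon>) powr (\<theta>l*\<gamma>/\<theta>)"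
    if \<epsilon>: "0 < \<epsilon>" for \<epsilon>
  proof -
    have "forcing s \<le> K * weight \<epsilon> s" if s: "s \<in> {0<..t}" for s
    proof -
      have "E s powr (\<theta>l/\<theta>) \<le> (E s + \<epsilon>) powr (\<theta>l/\<theta>)"
        using E_nonneg[of s] \<epsilon> exponent_relations by (intro powr_mono2) auto
      then have "K * (Mf s powr (1/\<theta>) * E s powr (\<theta>l/\<theta>)) \<le> K * weight \<epsilon> s"
        unfolding weight_def using K by (intro mult_left_mono) auto
      then show ?thesis using forcing_le[OF s] by linarith
    qed
    then have "rnorm_root t \<le> S powr (1/\<theta>) * weight \<epsilon> t"
      unfolding S_def using t \<epsilon> K by (intro bound_with_slack) auto
    then have "rnorm_root t powr \<gamma> \<le> (S powr (1/\<theta>) * weight \<epsilon> t) powr \<gamma>"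
      using \<gamma>_pos by (intro powr_mono2) (auto simp: rnorm_root_def)
    also have "\<dots> = S powr (\<gamma>/\<theta>) * Mf t powr (\<gamma>/\<theta>) * (E t + \<epsilon>) powr (\<theta>l*\<gamma>/\<theta>)"
      unfolding weight_def using S Mf_nonneg[of t] E_nonneg[of t] \<epsilon>
      by (simp add: powr_mult powr_powr mult.assoc)
    finally show ?thesis by (simp add: rnorm_root_powr)
  qed
  have lim: "((\<lambda>\<epsilon>. S powr (\<gamma>/\<theta>) * Mf t powr (\<gamma>/\<theta>) * (E t + \<epsilon>) powr (\<theta>l*\<gamma>/\<theta>))
      \<longlongrightarrow> S powr (\<gamma>/\<theta>) * Mf t powr (\<gamma>/\<theta>) * (E t + 0) powr (\<theta>l*\<gamma>/\<theta>)) (at_right 0)"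
    using E_pos by (intro tendsto_intros) auto
  have "\<forall>\<^sub>F \<epsilon> in at_right 0.
      Lnorm M r (u t) \<le> S powr (\<gamma>/\<theta>) * Mf t powr (\<gamma>/\<theta>) * (E t + \<epsilon>) powr (\<theta>l*\<gamma>/\<theta>)"
    using eventually_at_right_less[of "0::real"] by eventually_elim (rule slack)
  from tendsto_lowerbound[OF lim this trivial_limit_at_right_real]
  show ?thesis unfolding S_def by simp
qed

lemma forcing_le_of_N:
  assumes B: "(SUP s\<in>{0<..t}. epowr (N s) \<theta>) = ennreal b" and b: "0 \<le> b" and s: "s \<in> {0<..t}"
  shows "forcing s \<le> b powr (1/\<theta>) * (Mf s powr (1/\<theta>) * E s powr (\<theta>l/\<theta>))"
proof -
  define W where "W = Mf s powr (1/\<theta>) * E s powr (\<theta>l/\<theta>)"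
  have F: "0 \<le> forcing s" unfolding forcing_def using Mf_nonneg gq_nonneg by simp
  have "ennreal (forcing s) / ennreal W \<le> N s"
    unfolding N_def W_def using s by (intro SUP_upper) auto
  then have "epowr (ennreal (forcing s) / ennreal W) \<theta> \<le> epowr (N s) \<theta>"
    using exponent_relations(1) by (intro epowr_mono) auto
  also have "\<dots> \<le> ennreal b"
    unfolding B[symmetric] using s by (rule SUP_upper)
  finally have le_b: "epowr (ennreal (forcing s) / ennreal W) \<theta> \<le> ennreal b" .
  show ?thesis
  proof (cases "W = 0")
    case True
    have "forcing s = 0"
    proof (rule ccontr)
      assume "forcing s \<noteq> 0"
      then have "ennreal (forcing s) / ennreal W = top" using True F by simp
      then show False using le_b by (simp add: top_unique)
    qed
    then show ?thesis by simp
  next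
    case False
    then have W: "0 < W" unfolding W_def by simp
    then have "(forcing s / W) powr \<theta> \<le> b"
      using le_b F b by (simp add: divide_ennreal epowr_ennreal ennreal_le_iff)
    then have "((forcing s / W) powr \<theta>) powr (1/\<theta>) \<le> b powr (1/\<theta>)"
      using exponent_relations(1) by (intro powr_mono2) auto
    then have "forcing s / W \<le> b powr (1/\<theta>)"
      using exponent_relations(1) F W by (simp add: powr_powr)
    then show ?thesis using W unfolding W_def[symmetric] by (simp add: divide_le_eq)
  qed
qed

lemma Lnorm_r_bound_ennreal:
  assumes t: "t \<in> {0<..T}"
  shows "ennreal (Lnorm M r (u t))
    \<le> ennreal (2 powr \<gamma>)
      * epowr (ennreal (2 powr (\<alpha> / (\<gamma> * \<theta>))) + (SUP s\<in>{0<..t}. epowr (N s) \<theta>)) (\<gamma>/\<theta>)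
      * ennreal (max (c1 t powr (1/\<theta>) * (1/t + \<omega>) powr (\<alpha>/\<theta>)) (c2 t powr (1/\<theta>)))
      * ennreal (E t powr (\<theta>l * \<gamma> / \<theta>))"
    (is "_ \<le> ?two * epowr (_ + ?B) _ * ennreal ?Q * _")
proof (cases "E t = 0")
  case True
  then show ?thesis using Lnorm_r_eq_0_if_E_eq_0 t by simp
next
  case False
  then have E_pos: "0 < E t" using E_nonneg[of t] by simp
  have "0 < 1/t + \<omega>" using t \<omega>_nonneg by (simp add: add_pos_nonneg)
  then have "0 < c1 t powr (1/\<theta>) * (1/t + \<omega>) powr (\<alpha>/\<theta>)"
    using t c1_pos[of t] by simp
  then have Q: "0 < ?Q" by (simp add: less_max_iff_disj)
  show ?thesis
  proof (cases "?B = top")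
    case True
    have "epowr (ennreal (2 powr (\<alpha> / (\<gamma> * \<theta>))) + ?B) (\<gamma>/\<theta>) = top"
      unfolding True by simp
    then show ?thesis using Q E_pos by (simp add: ennreal_mult_top ennreal_top_mult)
  next
    case False
    then obtain b where B: "?B = ennreal b" and b: "0 \<le> b"
      by (metis ennreal_cases top.not_eq_extremum)
    have "Lnorm M r (u t)
        \<le> (2 powr (\<alpha>/(\<gamma>*\<theta>)) + (b powr (1/\<theta>)) powr \<theta>) powr (\<gamma>/\<theta>) * Mf t powr (\<gamma>/\<theta>) * E t powr (\<theta>l*\<gamma>/\<theta>)"
      using t E_pos forcing_le_of_N[OF B b] by (intro Lnorm_r_bound) auto
    also have "\<dots> = (2 powr (\<alpha>/(\<gamma>*\<theta>)) + b) powr (\<gamma>/\<theta>) * ?Q * E t powr (\<theta>l*\<gamma>/\<theta>)"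
      using b exponent_relations(1) Mf_powr[OF t] by (simp add: powr_powr)
    also have "\<dots> \<le> 2 powr \<gamma> * ((2 powr (\<alpha>/(\<gamma>*\<theta>)) + b) powr (\<gamma>/\<theta>) * ?Q * E t powr (\<theta>l*\<gamma>/\<theta>))"
      using ge_one_powr_ge_zero[of 2 \<gamma>] \<gamma>_pos Q
      by (intro mult_le_cancel_right1[THEN iffD2]) (auto intro: mult_nonneg_nonneg simp: not_less)
    finally show ?thesis
      using b Q unfolding B
      by (simp add: epowr_ennreal ennreal_mult[symmetric] ennreal_plus[symmetric] mult.assoc ennreal_leI
               del: ennreal_plus)
  qed
qed

end

theorem theorem4p6:
  fixes M :: "'a measure" and l q T \<omega> \<alpha> \<gamma> \<gamma>s :: real and r :: ereal
    and u g :: "real \<Rightarrow> 'a \<Rightarrow> real" and c1 c2 :: "real \<Rightarrow> real"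
  assumes sf: "sigma_finite_measure M"
    and exps: "1 \<le> l" "l < q" "ereal q < r" and T: "T > 0"
    and g_meas: "(\<lambda>(\<tau>, x). g \<tau> x) \<in> borel_measurable (restrict_space lborel {0..T} \<Otimes>\<^sub>M M)"
    and g_Lp: "AE \<tau> in lborel. \<tau> \<in> {0..T} \<longrightarrow> memLp M (ereal l) (g \<tau>) \<and> memLp M (ereal q) (g \<tau>)"
    and g_int_l: "set_integrable lborel {0..T} (\<lambda>\<tau>. Lnorm M (ereal l) (g \<tau>))"
    and g_int_q: "set_integrable lborel {0..T} (\<lambda>\<tau>. Lnorm M (ereal q) (g \<tau>))"
    and u_meas: "(\<lambda>(t, x). u t x) \<in> borel_measurable (restrict_space lborel {0..T} \<Otimes>\<^sub>M M)"
    and u_Lp: "\<forall>t\<in>{0..T}. memLp M (ereal l) (u t) \<and> memLp M r (u t)"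
    and u_bdd: "\<exists>C. \<forall>t\<in>{0..T}. Lnorm M (ereal l) (u t) \<le> C \<and> Lnorm M r (u t) \<le> C"
    and \<omega>: "\<omega> \<ge> 0"
    and Gineq: "\<And>s t lam. 0 \<le> s \<Longrightarrow> s \<le> t \<Longrightarrow> t \<le> T \<Longrightarrow> lam \<ge> 0 \<Longrightarrow>
        Lnorm M (ereal l) (\<lambda>x. G lam (exp (-\<omega> * t) * u t x))
        \<le> Lnorm M (ereal l) (\<lambda>x. G lam (exp (-\<omega> * s) * u s x))
          + (LINT \<tau>:{s..t}|lborel. exp (-\<omega> * \<tau>) *
               Lnorm M (ereal l) (\<lambda>x. g \<tau> x * indicator {y. exp (-\<omega> * \<tau>) * \<bar>u \<tau> y\<bar> > lam} x))"
    and c1_mono: "mono_on {0..T} c1" and c2_mono: "mono_on {0..T} c2"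
    and c1_pos: "\<forall>t\<in>{0..T}. c1 t > 0" and c2_nonneg: "\<forall>t\<in>{0..T}. c2 t \<ge> 0"
    and \<alpha>: "\<alpha> \<ge> 0" and \<gamma>: "0 < \<gamma>s" "\<gamma>s \<le> \<gamma>"
    and smoothing: "\<And>t. t \<in> {0<..T} \<Longrightarrow>
        Lnorm M r (u t) \<le> max
          (c1 (t/2) * (2/t + \<omega>) powr \<alpha> *
             (Lnorm M (ereal q) (u (t/2)) + (LINT \<tau>:{t/2..t}|lborel. Lnorm M (ereal q) (g \<tau>))) powr \<gamma>)
          (c2 (t/2) *
             (Lnorm M (ereal q) (u (t/2)) + (LINT \<tau>:{t/2..t}|lborel. Lnorm M (ereal q) (g \<tau>))) powr \<gamma>s)"
    and \<theta>_pos: "1 - \<gamma> * (1/l - 1/q) / (1/l - exp_inv r) > 0"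
  shows "\<forall>t\<in>{0<..T}.
    (let \<theta> = 1 - \<gamma> * (1/l - 1/q) / (1/l - exp_inv r);
         \<theta>l = (1/q - exp_inv r) / (1/l - exp_inv r);
         E = (\<lambda>s. exp (\<omega> * s) * Lnorm M (ereal l) (u 0)
                   + (LINT \<tau>:{0..s}|lborel. exp (\<omega> * (s - \<tau>)) * Lnorm M (ereal l) (g \<tau>)));
         Mf = (\<lambda>s. max (c1 s powr (1/\<gamma>) * (1/s + \<omega>) powr (\<alpha>/\<gamma>)) (c2 s powr (1/\<gamma>)));
         gq = (\<lambda>a b. LINT \<tau>:{a..b}|lborel. Lnorm M (ereal q) (g \<tau>));
         N = (\<lambda>s. SUP s'\<in>{0<..s}.
                 ennreal (Mf (s'/2) * gq (s'/2) s' + c2 (s'/2) powr (1/\<gamma>))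
                 / ennreal (Mf s' powr (1/\<theta>) * E s' powr (\<theta>l/\<theta>)))
     in ennreal (Lnorm M r (u t))
        \<le> ennreal (2 powr \<gamma>)
          * epowr (ennreal (2 powr (\<alpha> / (\<gamma> * \<theta>))) + (SUP s\<in>{0<..t}. epowr (N s) \<theta>)) (\<gamma>/\<theta>)
          * ennreal (max (c1 t powr (1/\<theta>) * (1/t + \<omega>) powr (\<alpha>/\<theta>)) (c2 t powr (1/\<theta>)))
          * ennreal (E t powr (\<theta>l * \<gamma> / \<theta>)))"
proof -
  interpret extrapolation M l q T \<omega> \<alpha> \<gamma> \<gamma>s r u g c1 c2
  proof unfold_locales
    show "AE \<tau> in lborel. \<tau> \<in> {0..T} \<longrightarrow> memLp M (ereal l) (g \<tau>)"
      using g_Lp by eventually_elim auto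
  qed (use assms Gineq[of 0 _ 0] in auto)
  show ?thesis
    using Lnorm_r_bound_ennreal
    by (simp only: Let_def \<theta>_def \<theta>l_def E_def Mf_def gq_def N_def forcing_def) blast
qed

end
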